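(* For every admissible $v>9$ (i.e. $v\equiv 1$ or $3 \pmod 6$, $v>9$) and every Steiner triple system $\mathcal{S}=\mathrm{STS}(v)$, the graph $G_0=0$-$\mathrm{BIG}(\mathcal{S})$ is not silver. (For $v=7$ and $v=9$, $0$-$\mathrm{BIG}(\mathrm{STS}(v))$ is totally silver.)
   Context: A Steiner triple system $\mathrm{STS}(v)$ is a set $V$ of $v$ elements with a collection of $3$-subsets (blocks) such that every pair of elements lies in exactly one block; it exists iff $v\equiv 1,3\pmod 6$. The $0$-block intersection graph $0$-$\mathrm{BIG}$ has the blocks as vertices, two blocks adjacent iff they are disjoint; it is a regular graph. An $\alpha$-set of a graph is a maximum independent set. Let $G$ be an $r$-regular graph and $c$ a proper $(r+1)$-coloring of $G$. A vertex $x$ is rainbow with respect to $c$ if every one of the $r+1$ colors appears on $N[x]=N(x)\cup\{x\}$. Given an $\alpha$-set $I$, $c$ is silver with respect to $I$ if every $x\in I$ is rainbow; $G$ is silver if it admits a silver coloring with respect to some $\alpha$-set; $G$ is totally silver if it admits a proper $(r+1)$-coloring in which every vertex is rainbow. *)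

theory Defs
  imports Main
begin

definition is_STS :: "'a set \<Rightarrow> 'a set set \<Rightarrow> bool" where
  "is_STS V B \<longleftrightarrow> finite V \<and>
     (\<forall>b\<in>B. b \<subseteq> V \<and> card b = 3) \<and>
     (\<forall>x\<in>V. \<forall>y\<in>V. x \<noteq> y \<longrightarrow> (\<exists>!b. b \<in> B \<and> {x, y} \<subseteq> b))"

(* 0-block intersection graph: adjacency = disjointness of blocks (vertex set B) *)
definition zero_BIG_adj :: "'a set \<Rightarrow> 'a set \<Rightarrow> bool" where
  "zero_BIG_adj b b' \<longleftrightarrow> b \<inter> b' = {}"

definition nbhd :: "'b set \<Rightarrow> ('b \<Rightarrow> 'b \<Rightarrow> bool) \<Rightarrow> 'b \<Rightarrow> 'b set" where
  "nbhd Vs adj x = {y \<in> Vs. adj x y}"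

definition closed_nbhd :: "'b set \<Rightarrow> ('b \<Rightarrow> 'b \<Rightarrow> bool) \<Rightarrow> 'b \<Rightarrow> 'b set" where
  "closed_nbhd Vs adj x = insert x (nbhd Vs adj x)"

definition regular_graph :: "'b set \<Rightarrow> ('b \<Rightarrow> 'b \<Rightarrow> bool) \<Rightarrow> nat \<Rightarrow> bool" where
  "regular_graph Vs adj r \<longleftrightarrow> (\<forall>x\<in>Vs. card (nbhd Vs adj x) = r)"

definition independent_set :: "'b set \<Rightarrow> ('b \<Rightarrow> 'b \<Rightarrow> bool) \<Rightarrow> 'b set \<Rightarrow> bool" where
  "independent_set Vs adj I \<longleftrightarrow> I \<subseteq> Vs \<and> (\<forall>x\<in>I. \<forall>y\<in>I. \<not> adj x y)"

definition alpha_set :: "'b set \<Rightarrow> ('b \<Rightarrow> 'b \<Rightarrow> bool) \<Rightarrow> 'b set \<Rightarrow> bool" where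
  "alpha_set Vs adj I \<longleftrightarrow> independent_set Vs adj I \<and>
     (\<forall>J. independent_set Vs adj J \<longrightarrow> card J \<le> card I)"

definition proper_coloring :: "'b set \<Rightarrow> ('b \<Rightarrow> 'b \<Rightarrow> bool) \<Rightarrow> nat \<Rightarrow> ('b \<Rightarrow> nat) \<Rightarrow> bool" where
  "proper_coloring Vs adj k c \<longleftrightarrow> (\<forall>x\<in>Vs. c x < k) \<and>
     (\<forall>x\<in>Vs. \<forall>y\<in>Vs. adj x y \<longrightarrow> c x \<noteq> c y)"

definition rainbow :: "'b set \<Rightarrow> ('b \<Rightarrow> 'b \<Rightarrow> bool) \<Rightarrow> nat \<Rightarrow> ('b \<Rightarrow> nat) \<Rightarrow> 'b \<Rightarrow> bool" where
  "rainbow Vs adj r c x \<longleftrightarrow> {..<r+1} \<subseteq> c ` closed_nbhd Vs adj x"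

(* for an r-regular graph *)
definition silver :: "'b set \<Rightarrow> ('b \<Rightarrow> 'b \<Rightarrow> bool) \<Rightarrow> nat \<Rightarrow> bool" where
  "silver Vs adj r \<longleftrightarrow> (\<exists>I c. alpha_set Vs adj I \<and> proper_coloring Vs adj (r+1) c \<and>
     (\<forall>x\<in>I. rainbow Vs adj r c x))"

definition totally_silver :: "'b set \<Rightarrow> ('b \<Rightarrow> 'b \<Rightarrow> bool) \<Rightarrow> nat \<Rightarrow> bool" where
  "totally_silver Vs adj r \<longleftrightarrow> (\<exists>c. proper_coloring Vs adj (r+1) c \<and>
     (\<forall>x\<in>Vs. rainbow Vs adj r c x))"

end

theory Submission
  imports Defs
begin

(* Let S = (V, B) be an STS(v) with v = 2k + 1, so every point lies on k blocks.  A block meets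
   itself and 3(k - 1) other blocks, so the 0-block intersection graph G is r-regular with
   r = |B| - (3k - 2); its independent sets are exactly the intersecting families of blocks.

   For v > 9 (k >= 6) a maximum intersecting family I is either a star (all blocks through one
   point) or, only when v = 15, a Fano subsystem on seven points.  Either way |I| = k, every
   block outside I meets exactly three members of I, and for v = 13 the family I covers V.
   In a silver colouring each closed neighbourhood N[y], y in I, shows every colour exactly once;
   this forces every colour to occur on I itself, i.e. r + 1 <= k, whereas r + 1 > k.
   For v = 7 the graph is edgeless and for v = 9 it is a disjoint union of triangles; such
   disjoint unions of cliques are totally silver. *)

lemma closed_nbhd_subset: "x \<in> Vs \<Longrightarrow> closed_nbhd Vs adj x \<subseteq> Vs"
  unfolding closed_nbhd_def nbhd_def by auto

lemma card_closed_nbhd: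
  assumes "finite Vs" "x \<in> Vs" "\<not> adj x x" "regular_graph Vs adj r"
  shows "card (closed_nbhd Vs adj x) = r + 1"
proof -
  have "x \<notin> nbhd Vs adj x" "finite (nbhd Vs adj x)"
    using assms(1,3) unfolding nbhd_def by auto
  thus ?thesis using assms(2,4) unfolding closed_nbhd_def regular_graph_def by simp
qed

lemma rainbow_inj_on:
  assumes "finite Vs" "x \<in> Vs" "\<not> adj x x" "regular_graph Vs adj r"
    and "proper_coloring Vs adj (r + 1) c" "rainbow Vs adj r c x"
  shows "inj_on c (closed_nbhd Vs adj x)"
proof -
  let ?N = "closed_nbhd Vs adj x"
  have "c ` ?N \<subseteq> {..<r + 1}"
    using assms(5) closed_nbhd_subset[OF assms(2)] unfolding proper_coloring_def by auto
  with assms(6) have "c ` ?N = {..<r + 1}" unfolding rainbow_def by blast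
  hence "card (c ` ?N) = card ?N" using card_closed_nbhd[OF assms(1-4)] by simp
  moreover have "finite ?N" using finite_subset[OF closed_nbhd_subset[OF assms(2)] assms(1)] .
  ultimately show ?thesis using inj_on_iff_eq_card by blast
qed

(* A disjoint union of cliques K_(r+1) (closed neighbourhoods of size r + 1 that coincide for
   adjacent vertices) is totally silver: colour each clique bijectively. *)
lemma cluster_graph_totally_silver:
  assumes irrefl: "\<forall>x\<in>Vs. \<not> adj x x"
    and card: "\<forall>x\<in>Vs. card (closed_nbhd Vs adj x) = r + 1"
    and clique: "\<forall>x\<in>Vs. \<forall>z\<in>closed_nbhd Vs adj x. closed_nbhd Vs adj z = closed_nbhd Vs adj x"
  shows "totally_silver Vs adj r"
proof -
  let ?N = "closed_nbhd Vs adj"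
  define g where "g Q = (SOME f. bij_betw f Q {..<r + 1})" for Q :: "'a set"
  have g: "bij_betw (g (?N x)) (?N x) {..<r + 1}" if "x \<in> Vs" for x
  proof -
    have "finite (?N x)" using card that by (metis card.infinite add_is_0 one_neq_zero)
    hence "\<exists>f. bij_betw f (?N x) {..<r + 1}"
      using finite_same_card_bij[of "?N x" "{..<r + 1}"] card that by simp
    thus ?thesis unfolding g_def by (rule someI_ex)
  qed
  define c where "c z = g (?N z) z" for z
  have c_restrict: "\<forall>z\<in>?N x. c z = g (?N x) z" if "x \<in> Vs" for x
    using clique that unfolding c_def by simp
  have self: "x \<in> ?N x" for x unfolding closed_nbhd_def by simp
  have image: "c ` ?N x = {..<r + 1}" and inj: "inj_on c (?N x)" if "x \<in> Vs" for x
    using g[OF that] c_restrict[OF that] image_cong[OF refl, of _ c "g (?N x)"]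
      inj_on_cong[of "?N x" c "g (?N x)"] unfolding bij_betw_def by auto
  have "proper_coloring Vs adj (r + 1) c"
    unfolding proper_coloring_def
  proof (intro conjI ballI impI)
    fix x assume "x \<in> Vs"
    thus "c x < r + 1" using image self by blast
  next
    fix x y assume x: "x \<in> Vs" and y: "y \<in> Vs" and "adj x y"
    hence "y \<in> ?N x" "x \<noteq> y" using irrefl unfolding closed_nbhd_def nbhd_def by auto
    thus "c x \<noteq> c y" using inj[OF x] self unfolding inj_on_def by metis
  qed
  moreover have "\<forall>x\<in>Vs. rainbow Vs adj r c x" unfolding rainbow_def using image by simp
  ultimately show ?thesis unfolding totally_silver_def by blast
qed

locale sts =
  fixes V :: "'a set" and B :: "'a set set"
  assumes is_sts: "is_STS V B"
begin

lemma finite_points: "finite V"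
  and block_subset: "b \<in> B \<Longrightarrow> b \<subseteq> V"
  and card_block: "b \<in> B \<Longrightarrow> card b = 3"
  and unique_block: "p \<in> V \<Longrightarrow> q \<in> V \<Longrightarrow> p \<noteq> q \<Longrightarrow> \<exists>!b. b \<in> B \<and> {p, q} \<subseteq> b"
  using is_sts unfolding is_STS_def by auto

lemma finite_block: "b \<in> B \<Longrightarrow> finite b"
  using card_block by (metis card.infinite zero_neq_numeral)

lemma finite_blocks: "finite B"
  using finite_subset[of B "Pow V"] block_subset finite_points by auto

lemma block_eq_if_two_common:
  "b \<in> B \<Longrightarrow> b' \<in> B \<Longrightarrow> p \<noteq> q \<Longrightarrow> p \<in> b \<Longrightarrow> q \<in> b \<Longrightarrow> p \<in> b' \<Longrightarrow> q \<in> b' \<Longrightarrow> b = b'"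
  using unique_block[of p q] block_subset by blast

lemma block_eq_triple:
  assumes "b \<in> B" "{p, q, s} \<subseteq> b" "p \<noteq> q" "q \<noteq> s" "p \<noteq> s"
  shows "b = {p, q, s}"
  using card_subset_eq[OF finite_block[OF assms(1)] assms(2)] card_block[OF assms(1)] assms(3-5)
  by simp

definition line :: "'a \<Rightarrow> 'a \<Rightarrow> 'a set" where
  "line p q = (THE b. b \<in> B \<and> {p, q} \<subseteq> b)"

lemma line:
  assumes "p \<in> V" "q \<in> V" "p \<noteq> q"
  shows "line p q \<in> B" "p \<in> line p q" "q \<in> line p q"
  using theI'[OF unique_block[OF assms]] unfolding line_def by auto

definition star :: "'a \<Rightarrow> 'a set set" where
  "star p = {b \<in> B. p \<in> b}"

lemma finite_star: "finite (star p)"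
  using finite_blocks unfolding star_def by simp

(* Pencil counting: blocks through p meet pairwise only in p, so a family F of blocks through p
   whose union is exactly the set X partitions X - {p} into 2-sets. *)
lemma card_pencil:
  assumes F: "F \<subseteq> B" "\<forall>b\<in>F. p \<in> b" and X: "p \<in> X" "\<Union>F \<subseteq> X" "X - {p} \<subseteq> \<Union>F"
  shows "card X = 2 * card F + 1"
proof -
  have fin: "finite F" using finite_subset[OF F(1) finite_blocks] .
  have eq: "X - {p} = (\<Union>b\<in>F. b - {p})" using X by blast
  have disj: "(b - {p}) \<inter> (b' - {p}) = {}" if "b \<in> F" "b' \<in> F" "b \<noteq> b'" for b b'
  proof -
    have "b = b'" if "w \<in> b - {p}" "w \<in> b' - {p}" for w
      using that \<open>b \<in> F\<close> \<open>b' \<in> F\<close> F block_eq_if_two_common[of b b' w p] by auto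
    thus ?thesis using \<open>b \<noteq> b'\<close> by blast
  qed
  have "card (\<Union>b\<in>F. b - {p}) = (\<Sum>b\<in>F. card (b - {p}))"
    using fin F(1) finite_block disj by (intro card_UN_disjoint) auto
  also have "\<dots> = (\<Sum>b\<in>F. 2)"
    using F card_block finite_block by (intro sum.cong) auto
  finally have card_rest: "card (X - {p}) = 2 * card F" using eq by simp
  have "finite (X - {p})" unfolding eq using fin F(1) finite_block by blast
  hence "finite X" by simp
  thus ?thesis using X(1) card_rest card_Suc_Diff1[of X p] by simp
qed

(* The replication number: every point lies on (v - 1)/2 blocks. *)
definition repl :: nat where
  "repl = (card V - 1) div 2"

lemma star_covers: "p \<in> V \<Longrightarrow> V - {p} \<subseteq> \<Union>(star p)"
proof
  fix q assume "p \<in> V" "q \<in> V - {p}"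
  hence "line p q \<in> star p" "q \<in> line p q" using line[of p q] unfolding star_def by auto
  thus "q \<in> \<Union>(star p)" by blast
qed

lemma card_points_star: "p \<in> V \<Longrightarrow> card V = 2 * card (star p) + 1"
  using star_covers block_subset by (intro card_pencil) (auto simp: star_def)

lemma card_star: "p \<in> V \<Longrightarrow> card (star p) = repl"
  using card_points_star unfolding repl_def by force

lemma card_points: "V \<noteq> {} \<Longrightarrow> card V = 2 * repl + 1"
  using card_points_star card_star by (metis ex_in_conv)

(* Counting point-block incidences in two ways. *)
lemma card_blocks: "3 * card B = card V * repl"
proof -
  have "(\<Sum>p\<in>V. card {b\<in>B. p \<in> b}) = 3 * card B"
    using finite_points finite_blocks card_block block_subset
    by (intro sum_multicount) (auto simp: Int_absorb1 Int_def[symmetric])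
  moreover have "(\<Sum>p\<in>V. card {b\<in>B. p \<in> b}) = card V * repl"
    using card_star unfolding star_def by simp
  ultimately show ?thesis by simp
qed

(* A block x meets itself and, through each of its three points, repl - 1 further blocks. *)
lemma card_meeting_blocks:
  assumes x: "x \<in> B"
  shows "card {y\<in>B. y \<inter> x \<noteq> {}} = 3 * repl - 2"
proof -
  have star_x: "x \<in> star w" "w \<in> V" if "w \<in> x" for w
    using that x block_subset unfolding star_def by auto
  obtain w where "w \<in> x" using card_block[OF x] by fastforce
  hence "0 < card (star w)" using star_x finite_star by (auto simp: card_gt_0_iff)
  hence repl_pos: "repl \<ge> 1" using star_x(2)[OF \<open>w \<in> x\<close>] card_star by simp
  define M where "M = (\<Union>w\<in>x. star w - {x})"
  have disj: "(star w - {x}) \<inter> (star w' - {x}) = {}" if "w \<in> x" "w' \<in> x" "w \<noteq> w'" for w w'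
  proof -
    have "b = x" if "b \<in> star w" "b \<in> star w'" for b
      using that \<open>w \<in> x\<close> \<open>w' \<in> x\<close> \<open>w \<noteq> w'\<close> x block_eq_if_two_common[of b x w w']
      unfolding star_def by auto
    thus ?thesis by blast
  qed
  have "card M = (\<Sum>w\<in>x. card (star w - {x}))"
    unfolding M_def using finite_block[OF x] finite_star disj by (intro card_UN_disjoint) auto
  also have "\<dots> = (\<Sum>w\<in>x. repl - 1)"
    using star_x card_star finite_star by (intro sum.cong) auto
  finally have "card M = 3 * (repl - 1)" using card_block[OF x] by simp
  moreover have "finite M" "x \<notin> M" unfolding M_def using finite_block[OF x] finite_star by auto
  moreover have "{y\<in>B. y \<inter> x \<noteq> {}} = insert x M"
    using x card_block[OF x] unfolding M_def star_def by auto
  ultimately show ?thesis using repl_pos by simp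
qed

definition degree :: nat where
  "degree = card B - (3 * repl - 2)"

lemma regular: "regular_graph B zero_BIG_adj degree"
  unfolding regular_graph_def
proof
  fix x assume x: "x \<in> B"
  have "nbhd B zero_BIG_adj x = B - {y\<in>B. y \<inter> x \<noteq> {}}"
    unfolding nbhd_def zero_BIG_adj_def by auto
  thus "card (nbhd B zero_BIG_adj x) = degree"
    unfolding degree_def using card_meeting_blocks[OF x] finite_blocks
    by (simp add: card_Diff_subset)
qed

lemma not_adj_self: "x \<in> B \<Longrightarrow> \<not> zero_BIG_adj x x"
  using card_block unfolding zero_BIG_adj_def by fastforce

lemma card_closed_nbhd_blocks:
  assumes "x \<in> B"
  shows "card (closed_nbhd B zero_BIG_adj x) = degree + 1"
  by (rule card_closed_nbhd[OF finite_blocks assms not_adj_self[OF assms] regular])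

definition intersecting :: "'a set set \<Rightarrow> bool" where
  "intersecting I \<longleftrightarrow> I \<subseteq> B \<and> (\<forall>x\<in>I. \<forall>y\<in>I. x \<inter> y \<noteq> {})"

lemma independent_iff_intersecting: "independent_set B zero_BIG_adj I \<longleftrightarrow> intersecting I"
  unfolding independent_set_def intersecting_def zero_BIG_adj_def by blast

lemma intersecting_finite: "intersecting I \<Longrightarrow> finite I"
  unfolding intersecting_def using finite_subset finite_blocks by blast

lemma alpha_set_intersecting:
  assumes "alpha_set B zero_BIG_adj I" "V \<noteq> {}"
  shows "intersecting I" "repl \<le> card I"
proof -
  show "intersecting I" using assms(1) unfolding alpha_set_def independent_iff_intersecting by simp
  obtain p where "p \<in> V" using assms(2) by blast
  moreover have "intersecting (star p)" unfolding intersecting_def star_def by auto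
  ultimately show "repl \<le> card I"
    using assms(1) card_star unfolding alpha_set_def independent_iff_intersecting by metis
qed

definition deg :: "'a set set \<Rightarrow> 'a \<Rightarrow> nat" where
  "deg I p = card {y\<in>I. p \<in> y}"

(* A block avoiding p meets the blocks of a pencil through p in pairwise distinct points;
   hence the pencil has at most three members, and exactly three only if they cover the block. *)
lemma transversal:
  assumes F: "F \<subseteq> B" "\<forall>b\<in>F. p \<in> b" and y: "y \<in> B" "p \<notin> y" "\<forall>b\<in>F. b \<inter> y \<noteq> {}"
  shows "card F \<le> 3" "card F = 3 \<Longrightarrow> y \<subseteq> \<Union>F"
proof -
  define g where "g b = (SOME w. w \<in> b \<inter> y)" for b
  have g: "g b \<in> b \<inter> y" if "b \<in> F" for b
    using y(3) that unfolding g_def by (metis all_not_in_conv someI_ex)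
  have inj: "inj_on g F"
  proof (rule inj_onI)
    fix b b' assume "b \<in> F" "b' \<in> F" "g b = g b'"
    moreover from this have "g b \<noteq> p" using g y(2) by blast
    ultimately show "b = b'" using g F block_eq_if_two_common by (metis IntE subsetD)
  qed
  have image: "g ` F \<subseteq> y" using g by blast
  show "card F \<le> 3" using card_inj_on_le[OF inj image finite_block[OF y(1)]] card_block[OF y(1)] by simp
  assume "card F = 3"
  hence "g ` F = y"
    using card_image[OF inj] image card_block[OF y(1)] finite_block[OF y(1)] card_subset_eq by metis
  thus "y \<subseteq> \<Union>F" using g by blast
qed

lemma intersecting_star:
  assumes I: "intersecting I" "repl \<le> card I" and p: "4 \<le> deg I p"
  shows "I = star p"
proof -
  let ?F = "{y\<in>I. p \<in> y}"
  have "?F \<noteq> {}" using p unfolding deg_def by (metis card.empty not_numeral_le_zero)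
  hence pV: "p \<in> V" using I(1) block_subset unfolding intersecting_def by blast
  have "p \<in> y" if "y \<in> I" for y
  proof (rule ccontr)
    assume "p \<notin> y"
    hence "card ?F \<le> 3" using that I(1) unfolding intersecting_def by (intro transversal) blast+
    thus False using p unfolding deg_def by simp
  qed
  hence "I \<subseteq> star p" using I(1) unfolding intersecting_def star_def by blast
  moreover have "card (star p) \<le> card I" using I(2) card_star[OF pV] by simp
  ultimately show ?thesis using card_seteq[OF finite_star] by blast
qed

(* A block avoiding p meets exactly three blocks of star p, one through each of its points. *)
lemma star_meets_three:
  assumes z: "z \<in> B" "p \<notin> z" and p: "p \<in> V"
  shows "card {y\<in>star p. y \<inter> z \<noteq> {}} = 3"
proof -
  have zV: "w \<in> V" "p \<noteq> w" if "w \<in> z" for w using that z block_subset by auto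
  note line_pw = line[OF p zV]
  have "{y\<in>star p. y \<inter> z \<noteq> {}} = line p ` z"
  proof (intro equalityI subsetI)
    fix y assume "y \<in> {y\<in>star p. y \<inter> z \<noteq> {}}"
    then obtain w where y: "y \<in> B" "p \<in> y" "w \<in> y" and w: "w \<in> z" unfolding star_def by blast
    hence "y = line p w" using line_pw[OF w] zV(2)[OF w] block_eq_if_two_common[of y "line p w" p w]
      by simp
    thus "y \<in> line p ` z" using w by blast
  next
    fix y assume "y \<in> line p ` z"
    then obtain w where "w \<in> z" "y = line p w" by blast
    thus "y \<in> {y\<in>star p. y \<inter> z \<noteq> {}}" using line_pw unfolding star_def by blast
  qed
  moreover have "inj_on (line p) z"
  proof (rule inj_onI, rule ccontr)
    fix w w' assume w: "w \<in> z" "w' \<in> z" "line p w = line p w'" "w \<noteq> w'"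
    hence "line p w = z"
      using line_pw[OF w(1)] line_pw[OF w(2)] z(1) block_eq_if_two_common[of "line p w" z w w'] by simp
    thus False using line_pw[OF w(1)] w(1) z(2) by simp
  qed
  ultimately show ?thesis using card_image card_block[OF z(1)] by metis
qed

lemma star_union:
  assumes "p \<in> V" "1 \<le> repl"
  shows "\<Union>(star p) = V"
proof -
  have "star p \<noteq> {}" using assms card_star by fastforce
  hence "p \<in> \<Union>(star p)" unfolding star_def by blast
  thus ?thesis using star_covers[OF assms(1)] block_subset unfolding star_def by blast
qed

(* Every member of I meets the block y = {a, b, c} of I, so I is covered by the pencils at a, b, c,
   which pairwise share only y. *)
lemma degree_sum:
  assumes I: "intersecting I" and y: "y \<in> I" "y = {a, b, c}"
  shows "card I + 2 \<le> deg I a + deg I b + deg I c"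
proof -
  let ?P = "\<lambda>u. {x\<in>I. u \<in> x} - {y}"
  have fin: "finite I" using intersecting_finite[OF I] .
  have cover: "I \<subseteq> insert y (?P a \<union> ?P b \<union> ?P c)"
  proof
    fix x assume x: "x \<in> I"
    then obtain u where "u \<in> x" "u \<in> y" using I y(1) unfolding intersecting_def by blast
    thus "x \<in> insert y (?P a \<union> ?P b \<union> ?P c)" using x y(2) by auto
  qed
  have "card I \<le> card (insert y (?P a \<union> ?P b \<union> ?P c))"
    using card_mono[OF _ cover] fin by simp
  also have "\<dots> \<le> card (?P a \<union> ?P b \<union> ?P c) + 1"
    using fin by (simp add: card_insert_if)
  also have "\<dots> \<le> card (?P a) + card (?P b) + card (?P c) + 1"
    using card_Un_le[of "?P a \<union> ?P b" "?P c"] card_Un_le[of "?P a" "?P b"] by simp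
  finally have le: "card I \<le> card (?P a) + card (?P b) + card (?P c) + 1" .
  have pencil: "card (?P u) + 1 = deg I u" if "u \<in> y" for u
    using that y(1) fin card.remove[of "{x\<in>I. u \<in> x}" y] unfolding deg_def by simp
  show ?thesis using le pencil[of a] pencil[of b] pencil[of c] y(2) by simp
qed

(* If three members of I pass through a, every other member is a transversal of them,
   so I lives on the seven points of that pencil. *)
lemma pencil_spans:
  assumes I: "intersecting I" and a: "deg I a = 3"
  shows "\<Union>I = \<Union>{y\<in>I. a \<in> y}" "card (\<Union>I) = 7"
proof -
  let ?F = "{y\<in>I. a \<in> y}"
  have F: "?F \<subseteq> B" "\<forall>b\<in>?F. a \<in> b" using I unfolding intersecting_def by auto
  have "y \<subseteq> \<Union>?F" if y: "y \<in> I" for y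
  proof (cases "a \<in> y")
    case False
    have "y \<in> B" "\<forall>b\<in>?F. b \<inter> y \<noteq> {}" using I y unfolding intersecting_def by auto
    thus ?thesis using transversal(2)[OF F _ False] a unfolding deg_def by blast
  qed (use y in blast)
  thus eq: "\<Union>I = \<Union>?F" by blast
  have "?F \<noteq> {}" using a unfolding deg_def by fastforce
  hence "a \<in> \<Union>?F" by blast
  thus "card (\<Union>I) = 7" unfolding eq using card_pencil[OF F] a unfolding deg_def by simp
qed

definition pairs :: "'a set \<Rightarrow> 'a set set" where
  "pairs X = {e. e \<subseteq> X \<and> card e = 2}"

definition covered :: "'a set set \<Rightarrow> 'a set set" where
  "covered I = (\<Union>y\<in>I. pairs y)"

lemma pair_covered_iff: "u \<noteq> w \<Longrightarrow> {u, w} \<in> covered I \<longleftrightarrow> (\<exists>y\<in>I. u \<in> y \<and> w \<in> y)"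
  unfolding covered_def pairs_def by auto

lemma pairs_elem: "e \<in> pairs X \<Longrightarrow> \<exists>u w. e = {u, w} \<and> u \<noteq> w \<and> u \<in> X \<and> w \<in> X"
  unfolding pairs_def by (auto simp: card_2_iff)

(* Distinct blocks cover disjoint sets of pairs, three pairs each. *)
lemma card_covered:
  assumes "I \<subseteq> B"
  shows "card (covered I) = 3 * card I"
proof -
  have fin: "finite I" using finite_subset[OF assms finite_blocks] .
  have disj: "pairs y \<inter> pairs y' = {}" if "y \<in> I" "y' \<in> I" "y \<noteq> y'" for y y'
  proof -
    have "y = y'" if e: "e \<in> pairs y" "e \<in> pairs y'" for e
    proof -
      obtain u w where "e = {u, w}" "u \<noteq> w" "u \<in> y" "w \<in> y" using pairs_elem[OF e(1)] by blast
      moreover have "e \<subseteq> y'" using e(2) unfolding pairs_def by simp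
      ultimately show ?thesis
        using \<open>y \<in> I\<close> \<open>y' \<in> I\<close> assms block_eq_if_two_common[of y y' u w] by auto
    qed
    thus ?thesis using \<open>y \<noteq> y'\<close> by blast
  qed
  have card_pairs_block: "card (pairs y) = 3" if "y \<in> I" for y
  proof -
    have "y \<in> B" using that assms by blast
    thus ?thesis using n_subsets[OF finite_block, of y 2] card_block unfolding pairs_def
      by (simp add: choose_two)
  qed
  have "card (covered I) = (\<Sum>y\<in>I. card (pairs y))"
    unfolding covered_def using fin disj assms finite_block
    by (intro card_UN_disjoint) (auto simp: pairs_def intro: finite_subset)
  thus ?thesis using card_pairs_block by simp
qed

lemma card_uncovered:
  assumes "I \<subseteq> B" "finite (\<Union>I)"
  shows "card (pairs (\<Union>I) - covered I) = (card (\<Union>I) choose 2) - 3 * card I"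
proof -
  have sub: "covered I \<subseteq> pairs (\<Union>I)" unfolding covered_def pairs_def by blast
  have "finite (pairs (\<Union>I))" using assms(2) unfolding pairs_def by simp
  hence "card (pairs (\<Union>I) - covered I) = card (pairs (\<Union>I)) - card (covered I)"
    using sub by (meson card_Diff_subset finite_subset)
  moreover have "card (pairs (\<Union>I)) = card (\<Union>I) choose 2"
    using n_subsets[OF assms(2)] unfolding pairs_def by simp
  ultimately show ?thesis using card_covered[OF assms(1)] by simp
qed

lemma uncovered_if_same_line:
  assumes "I \<subseteq> B" "q \<in> V - \<Union>I" "d \<in> \<Union>I" "d' \<in> \<Union>I" "d \<noteq> d'" "line q d = line q d'"
  shows "{d, d'} \<notin> covered I"
proof
  assume "{d, d'} \<in> covered I"
  then obtain y where y: "y \<in> I" "d \<in> y" "d' \<in> y" using pair_covered_iff[OF assms(5)] by blast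
  have "q \<noteq> d" "q \<noteq> d'" "d \<in> V" "d' \<in> V" using assms block_subset by blast+
  hence "line q d \<in> B" "q \<in> line q d" "d \<in> line q d" "d' \<in> line q d"
    using line[of q d] line[of q d'] assms(2,6) by auto
  hence "y = line q d" using y assms(1,5) block_eq_if_two_common[of y "line q d" d d'] by blast
  thus False using y(1) \<open>q \<in> line q d\<close> assms(2) by blast
qed

lemma outside_point_pinches:
  assumes IB: "I \<subseteq> B" and q: "q \<in> V - \<Union>I" and few: "card (star q) < card (\<Union>I)"
  shows "\<exists>e. e \<in> pairs (\<Union>I) - covered I \<and> (\<exists>t\<in>B. q \<in> t \<and> e \<subseteq> t)"
proof -
  let ?D = "\<Union>I"
  have DV: "?D \<subseteq> V" using IB block_subset by blast
  have line_q: "line q d \<in> star q" "d \<in> line q d" if "d \<in> ?D" for d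
    using line[of q d] q that DV unfolding star_def by auto
  have "\<not> inj_on (line q) ?D"
  proof
    assume "inj_on (line q) ?D"
    hence "card ?D \<le> card (star q)"
      using line_q finite_star by (intro card_inj_on_le) auto
    thus False using few by simp
  qed
  then obtain d d' where d: "d \<in> ?D" "d' \<in> ?D" "d \<noteq> d'" "line q d = line q d'"
    unfolding inj_on_def by blast
  have "{d, d'} \<in> pairs ?D - covered I"
    using uncovered_if_same_line[OF IB q d] d unfolding pairs_def by auto
  moreover have "q \<in> line q d" "{d, d'} \<subseteq> line q d" "line q d \<in> B"
    using line[of q d] line_q d q DV unfolding star_def by auto
  ultimately show ?thesis by blast
qed

lemma block_no_fourth_point:
  assumes "b \<in> B" "{p, q, s, t} \<subseteq> b" "p \<noteq> q" "q \<noteq> s" "p \<noteq> s"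
  shows "t \<in> {p, q, s}"
  using block_eq_triple[of b p q s] assms by auto

(* In an STS(13) no intersecting family of six blocks lives on seven points: each of the six
   outside points q sees two points of the family on one line through q (there are only six such
   lines), giving distinct uncovered pairs, but at most three pairs are uncovered. *)
lemma no_small_fano:
  assumes I: "intersecting I" "6 \<le> card I" and D: "card (\<Union>I) = 7" and r: "repl = 6"
  shows False
proof -
  let ?D = "\<Union>I" and ?U = "pairs (\<Union>I) - covered I"
  have IB: "I \<subseteq> B" using I(1) unfolding intersecting_def by simp
  have finD: "finite ?D" using D by (metis card.infinite zero_neq_numeral)
  have DV: "?D \<subseteq> V" using IB block_subset by blast
  have "card ?U = 21 - 3 * card I" using card_uncovered[OF IB finD] D by (simp add: choose_two)
  hence U: "card ?U \<le> 3" using I(2) by simp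
  have pinch: "\<exists>e. e \<in> ?U \<and> (\<exists>t\<in>B. q \<in> t \<and> e \<subseteq> t)" if q: "q \<in> V - ?D" for q
    using outside_point_pinches[OF IB q] card_star D r q by simp
  define pick where "pick q = (SOME e. e \<in> ?U \<and> (\<exists>t\<in>B. q \<in> t \<and> e \<subseteq> t))" for q
  have pick: "pick q \<in> ?U" "\<exists>t\<in>B. q \<in> t \<and> pick q \<subseteq> t" if "q \<in> V - ?D" for q
    using someI_ex[OF pinch[OF that]] unfolding pick_def by blast+
  have "inj_on pick (V - ?D)"
  proof (rule inj_onI, rule ccontr)
    fix q q' assume q: "q \<in> V - ?D" "q' \<in> V - ?D" "pick q = pick q'" "q \<noteq> q'"
    obtain u w where uw: "pick q = {u, w}" "u \<noteq> w" "u \<in> ?D" "w \<in> ?D"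
      using pick(1)[OF q(1)] pairs_elem by blast
    obtain t t' where t: "t \<in> B" "q \<in> t" "{u, w} \<subseteq> t" and t': "t' \<in> B" "q' \<in> t'" "{u, w} \<subseteq> t'"
      using pick(2) q uw(1) by metis
    have "t = t'" using block_eq_if_two_common[OF t(1) t'(1) uw(2)] t t' by simp
    hence "q' \<in> {q, u, w}" using block_no_fourth_point[of t q u w q'] t t' q uw by auto
    thus False using q uw by auto
  qed
  hence "card (V - ?D) \<le> card ?U"
    using pick(1) finite_subset[of ?U "pairs ?D"] finD by (intro card_inj_on_le) (auto simp: pairs_def)
  moreover have "card (V - ?D) = 6"
  proof -
    have "?D \<noteq> {}" using D by (metis card.empty zero_neq_numeral)
    hence "V \<noteq> {}" using DV by blast
    hence "card V = 13" using card_points r by simp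
    thus ?thesis using card_Diff_subset[OF finD DV] D by simp
  qed
  ultimately show False using U by simp
qed

lemma fano_case:
  assumes I: "intersecting I" "repl \<le> card I" "6 \<le> repl" and low: "\<forall>q. deg I q \<le> 3"
  shows "repl = 7" "card I = 7" "card (\<Union>I) = 7" "pairs (\<Union>I) \<subseteq> covered I"
proof -
  have IB: "I \<subseteq> B" using I(1) unfolding intersecting_def by simp
  obtain y where y: "y \<in> I" using I(2,3) by fastforce
  then obtain a b c where "y = {a, b, c}" using IB card_block unfolding card_3_iff by blast
  hence sum: "card I + 2 \<le> deg I a + deg I b + deg I c" using degree_sum[OF I(1) y] by simp
  have le: "deg I a \<le> 3" "deg I b \<le> 3" "deg I c \<le> 3" using low by auto
  hence small: "card I \<le> 7" using sum by linarith
  have "deg I a = 3 \<or> deg I b = 3 \<or> deg I c = 3" using sum le I(2,3) by linarith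
  then obtain u where "deg I u = 3" by blast
  thus D: "card (\<Union>I) = 7" using pencil_spans(2)[OF I(1)] by blast
  have "repl \<noteq> 6" using no_small_fano[OF I(1) _ D] I(2) by auto
  thus "repl = 7" "card I = 7" using small I(2,3) by auto
  have finD: "finite (\<Union>I)" using D by (metis card.infinite zero_neq_numeral)
  have "card (pairs (\<Union>I) - covered I) = 0"
    using card_uncovered[OF IB finD] D \<open>card I = 7\<close> by (simp add: choose_two)
  moreover have "finite (pairs (\<Union>I))" using finD unfolding pairs_def by simp
  ultimately show "pairs (\<Union>I) \<subseteq> covered I" by simp
qed

lemma covering_pair:
  assumes "pairs (\<Union>I) \<subseteq> covered I" "u \<in> \<Union>I" "w \<in> \<Union>I" "u \<noteq> w"
  shows "\<exists>y\<in>I. u \<in> y \<and> w \<in> y"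
proof -
  have "{u, w} \<in> pairs (\<Union>I)" using assms(2-4) unfolding pairs_def by auto
  thus ?thesis using assms(1,4) pair_covered_iff by blast
qed

lemma covering_deg:
  assumes IB: "I \<subseteq> B" and cov: "pairs (\<Union>I) \<subseteq> covered I" and d: "d \<in> \<Union>I"
  shows "card (\<Union>I) = 2 * deg I d + 1"
  unfolding deg_def
proof (rule card_pencil)
  show "{y\<in>I. d \<in> y} \<subseteq> B" "\<forall>b\<in>{y\<in>I. d \<in> y}. d \<in> b" using IB by auto
  show "d \<in> \<Union>I" "\<Union>{y\<in>I. d \<in> y} \<subseteq> \<Union>I" using d by auto
  show "\<Union>I - {d} \<subseteq> \<Union>{y\<in>I. d \<in> y}"
  proof
    fix w assume w: "w \<in> \<Union>I - {d}"
    thus "w \<in> \<Union>{y\<in>I. d \<in> y}" using covering_pair[OF cov d, of w] by auto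
  qed
qed

(* If I covers every pair of its point set D and |D| = repl, then for an outside point q the map
   d \<mapsto> line q d is a bijection from D onto the blocks through q (distinct points of D cannot
   share a line through q, since their common line is a block of I). *)
lemma lines_onto_star:
  assumes IB: "I \<subseteq> B" and cov: "pairs (\<Union>I) \<subseteq> covered I"
    and q: "q \<in> V - \<Union>I" and D: "card (\<Union>I) = repl"
  shows "line q ` \<Union>I = star q"
proof -
  let ?D = "\<Union>I"
  have DV: "?D \<subseteq> V" using IB block_subset by blast
  have "inj_on (line q) ?D"
  proof (rule inj_onI, rule ccontr)
    fix d d' assume d: "d \<in> ?D" "d' \<in> ?D" "line q d = line q d'" "d \<noteq> d'"
    have "{d, d'} \<notin> covered I" using uncovered_if_same_line[OF IB q d(1,2,4,3)] .
    thus False using covering_pair[OF cov d(1,2,4)] pair_covered_iff[OF d(4)] by blast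
  qed
  hence "card (line q ` ?D) = card (star q)" using card_image[of "line q" ?D] D card_star q by simp
  moreover have "line q ` ?D \<subseteq> star q"
  proof
    fix b assume "b \<in> line q ` ?D"
    then obtain d where d: "d \<in> ?D" "b = line q d" by blast
    moreover have "d \<in> V" "q \<noteq> d" "q \<in> V" using d(1) DV q by auto
    ultimately show "b \<in> star q" using line[of q d] unfolding star_def by simp
  qed
  ultimately show ?thesis using card_subset_eq[OF finite_star] by simp
qed

(* In the Fano case every block z outside I meets the seven points of I in exactly one point d
   (two would span a block of I), and then the blocks of I meeting z are the three through d. *)
lemma fano_meets_three:
  assumes I: "intersecting I" and D: "card (\<Union>I) = 7" and r: "repl = 7"
    and cov: "pairs (\<Union>I) \<subseteq> covered I" and z: "z \<in> B" "z \<notin> I"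
  shows "card {y\<in>I. y \<inter> z \<noteq> {}} = 3"
proof -
  let ?D = "\<Union>I"
  have IB: "I \<subseteq> B" using I unfolding intersecting_def by simp
  have DV: "?D \<subseteq> V" using IB block_subset by blast
  have one_point: "u = w" if uw: "u \<in> z" "w \<in> z" "u \<in> ?D" "w \<in> ?D" for u w
  proof (rule ccontr)
    assume "u \<noteq> w"
    then obtain y where y: "y \<in> I" "u \<in> y" "w \<in> y" using covering_pair[OF cov uw(3,4)] by blast
    have "y \<in> B" using IB y(1) by blast
    hence "y = z" using block_eq_if_two_common[OF _ z(1) \<open>u \<noteq> w\<close>] y(2,3) uw(1,2) by simp
    thus False using y(1) z(2) by simp
  qed
  have "\<not> z \<subseteq> ?D"
  proof
    assume zD: "z \<subseteq> ?D"
    obtain a b c where "z = {a, b, c}" "a \<noteq> b" using card_block[OF z(1)] unfolding card_3_iff by blast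
    thus False using one_point[of a b] zD by simp
  qed
  then obtain q where q: "q \<in> z" "q \<notin> ?D" by blast
  have qV: "q \<in> V" using q z(1) block_subset by blast
  have image: "line q ` ?D = star q" using lines_onto_star[OF IB cov] q qV D r by simp
  have "z \<in> line q ` ?D" unfolding image using z(1) q unfolding star_def by simp
  then obtain d where d: "d \<in> ?D" "z = line q d" by blast
  have dz: "d \<in> z" using d line[of q d] q qV DV by auto
  have "{y\<in>I. y \<inter> z \<noteq> {}} = {y\<in>I. d \<in> y}"
  proof (intro equalityI subsetI)
    fix y assume "y \<in> {y\<in>I. y \<inter> z \<noteq> {}}"
    then obtain w where y: "y \<in> I" "w \<in> y" "w \<in> z" by blast
    moreover have "w \<in> ?D" using y(1,2) by blast
    ultimately have "w = d" using one_point[of w d] d(1) dz by simp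
    thus "y \<in> {y\<in>I. d \<in> y}" using y by simp
  qed (use dz in blast)
  moreover have "deg I d = 3" using covering_deg[OF IB cov d(1)] D by simp
  ultimately show ?thesis unfolding deg_def by simp
qed

lemma max_intersecting:
  assumes I: "intersecting I" "repl \<le> card I" "6 \<le> repl"
  shows "card I = repl" "\<forall>z\<in>B - I. card {y\<in>I. y \<inter> z \<noteq> {}} = 3" "repl = 6 \<Longrightarrow> \<Union>I = V"
proof -
  have IB: "I \<subseteq> B" using I(1) unfolding intersecting_def by simp
  have "card I = repl \<and> (\<forall>z\<in>B - I. card {y\<in>I. y \<inter> z \<noteq> {}} = 3) \<and> (repl = 6 \<longrightarrow> \<Union>I = V)"
  proof (cases "\<exists>p. 4 \<le> deg I p")
    case True
    then obtain p where "4 \<le> deg I p" by blast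
    hence I_star: "I = star p" using intersecting_star[OF I(1,2)] by blast
    obtain y where "y \<in> I" using I(2,3) by fastforce
    hence pV: "p \<in> V" using I_star IB block_subset unfolding star_def by blast
    have "\<forall>z\<in>B - I. card {y\<in>I. y \<inter> z \<noteq> {}} = 3"
      using star_meets_three pV unfolding I_star star_def by simp
    thus ?thesis using I_star card_star[OF pV] star_union[OF pV] I(3) by simp
  next
    case False
    have "\<forall>q. deg I q \<le> 3"
    proof
      fix q have "\<not> 4 \<le> deg I q" using False by blast
      thus "deg I q \<le> 3" by linarith
    qed
    note fano = fano_case[OF I this]
    thus ?thesis using fano_meets_three[OF I(1) fano(3,1,4)] by simp
  qed
  thus "card I = repl" "\<forall>z\<in>B - I. card {y\<in>I. y \<inter> z \<noteq> {}} = 3" "repl = 6 \<Longrightarrow> \<Union>I = V"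
    by auto
qed

(* Two (possibly equal) meeting blocks outside such a family cannot jointly meet all its members:
   each avoids repl - 3 of them, which forces repl = 6 and leaves no member for a common point. *)
lemma no_joint_transversal:
  assumes I: "intersecting I" "card I = repl" "6 \<le> repl"
    and meet3: "\<forall>z\<in>B - I. card {y\<in>I. y \<inter> z \<noteq> {}} = 3" and cover: "repl = 6 \<Longrightarrow> \<Union>I = V"
    and z: "z \<in> B - I" "z' \<in> B - I" "z \<inter> z' \<noteq> {}"
    and joint: "\<forall>y\<in>I. y \<inter> z \<noteq> {} \<or> y \<inter> z' \<noteq> {}"
  shows False
proof -
  have fin: "finite I" using intersecting_finite[OF I(1)] .
  let ?A = "\<lambda>w. {y\<in>I. y \<inter> w = {}}"
  have avoid: "card (?A w) = repl - 3" if "w \<in> B - I" for w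
  proof -
    have "?A w = I - {y\<in>I. y \<inter> w \<noteq> {}}" by blast
    thus ?thesis using meet3 that fin I(2) by (simp add: card_Diff_subset)
  qed
  have disj: "?A z \<inter> ?A z' = {}" using joint by blast
  have sub: "?A z \<union> ?A z' \<subseteq> I" by blast
  have "card (?A z \<union> ?A z') = 2 * (repl - 3)"
    using card_Un_disjoint[OF _ _ disj] fin avoid z(1,2) by simp
  moreover have "card (?A z \<union> ?A z') \<le> card I" using card_mono[OF fin sub] .
  ultimately have r: "repl = 6" "card (?A z \<union> ?A z') = card I" using I(2,3) by auto
  hence all: "?A z \<union> ?A z' = I" using card_subset_eq[OF fin sub] by simp
  obtain q where q: "q \<in> z" "q \<in> z'" using z(3) by blast
  hence "q \<in> \<Union>I" using cover[OF r(1)] z(1) block_subset by blast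
  then obtain y where y: "y \<in> I" "q \<in> y" by blast
  hence "y \<in> ?A z \<union> ?A z'" using all by simp
  thus False using q y(2) by blast
qed

lemma closed_nbhd_iff: "z \<in> closed_nbhd B zero_BIG_adj y \<longleftrightarrow> z = y \<or> (z \<in> B \<and> y \<inter> z = {})"
  unfolding closed_nbhd_def nbhd_def zero_BIG_adj_def by auto

lemma missing_colour_witness:
  assumes y: "y \<in> I" and rb: "\<forall>y\<in>I. rainbow B zero_BIG_adj degree c y" and j: "j < degree + 1"
    and missing: "\<not> (\<exists>y\<in>I. c y = j)"
  shows "\<exists>z. z \<in> B - I \<and> y \<inter> z = {} \<and> c z = j"
proof -
  have "j \<in> c ` closed_nbhd B zero_BIG_adj y" using rb y j unfolding rainbow_def by auto
  then obtain z where z: "z \<in> closed_nbhd B zero_BIG_adj y" "c z = j" by blast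
  hence "z \<noteq> y" using missing y by blast
  hence "z \<in> B" "y \<inter> z = {}" using z(1) closed_nbhd_iff by simp_all
  moreover have "z \<notin> I" using missing z(2) by blast
  ultimately show ?thesis using z(2) by blast
qed

(* Under a silver colouring every colour occurs on the alpha-set itself: otherwise two blocks of
   a missing colour, seen from two members of I, would form a joint transversal of I. *)
lemma silver_colour_on_alpha_set:
  assumes alpha: "alpha_set B zero_BIG_adj I" and r: "6 \<le> repl"
    and c: "proper_coloring B zero_BIG_adj (degree + 1) c" "\<forall>y\<in>I. rainbow B zero_BIG_adj degree c y"
    and j: "j < degree + 1"
  shows "\<exists>y\<in>I. c y = j"
proof (rule ccontr)
  assume missing: "\<not> (\<exists>y\<in>I. c y = j)"
  have "V \<noteq> {}" using r unfolding repl_def by auto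
  note I = alpha_set_intersecting[OF alpha this]
  note S = max_intersecting[OF I r]
  have IB: "I \<subseteq> B" using I(1) unfolding intersecting_def by simp
  have inj: "inj_on c (closed_nbhd B zero_BIG_adj y)" if y: "y \<in> I" for y
  proof -
    have "y \<in> B" using IB y by blast
    thus ?thesis using rainbow_inj_on[OF finite_blocks _ not_adj_self regular c(1)] c(2) y by simp
  qed
  have witness: "\<exists>z. z \<in> B - I \<and> y \<inter> z = {} \<and> c z = j" if "y \<in> I" for y
    using missing_colour_witness[OF _ c(2) j missing] that by blast
  have "I \<noteq> {}" using S(1) r by auto
  then obtain y0 where "y0 \<in> I" by blast
  then obtain z where z: "z \<in> B - I" "c z = j" using witness by blast
  have "card {y\<in>I. y \<inter> z \<noteq> {}} = 3" using S(2) z(1) by blast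
  hence "{y\<in>I. y \<inter> z \<noteq> {}} \<noteq> {}" by (intro notI) simp
  then obtain y1 where y1: "y1 \<in> I" "y1 \<inter> z \<noteq> {}" by blast
  then obtain z' where z': "z' \<in> B - I" "y1 \<inter> z' = {}" "c z' = j" using witness by blast
  have "z \<noteq> z'" using y1(2) z'(2) by blast
  have "z \<in> B" "z' \<in> B" "c z = c z'" using z z' by simp_all
  hence "\<not> zero_BIG_adj z z'" using c(1) unfolding proper_coloring_def by blast
  hence "z \<inter> z' \<noteq> {}" unfolding zero_BIG_adj_def .
  moreover have "\<forall>y\<in>I. y \<inter> z \<noteq> {} \<or> y \<inter> z' \<noteq> {}"
  proof (intro ballI, rule ccontr)
    fix y assume y: "y \<in> I" and "\<not> (y \<inter> z \<noteq> {} \<or> y \<inter> z' \<noteq> {})"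
    hence "z \<in> closed_nbhd B zero_BIG_adj y" "z' \<in> closed_nbhd B zero_BIG_adj y"
      using closed_nbhd_iff \<open>z \<in> B\<close> \<open>z' \<in> B\<close> by simp_all
    hence "z = z'" using inj_onD[OF inj[OF y] \<open>c z = c z'\<close>] by simp
    thus False using \<open>z \<noteq> z'\<close> by simp
  qed
  ultimately show False using no_joint_transversal[OF I(1) S(1) r S(2,3) z(1) z'(1)] by blast
qed

lemma degree_exceeds_repl:
  assumes "6 \<le> repl"
  shows "repl < degree + 1"
proof -
  have "V \<noteq> {}" using assms unfolding repl_def by auto
  hence "3 * card B = (2 * repl + 1) * repl" using card_blocks card_points by simp
  moreover have "(2 * repl + 1) * repl \<ge> 13 * repl" using assms by simp
  ultimately show ?thesis unfolding degree_def by linarith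
qed

(* For v > 9 no silver colouring exists: all degree + 1 colours would occur on an alpha-set,
   which has only repl < degree + 1 members. *)
theorem not_silver:
  assumes "6 \<le> repl"
  shows "\<not> silver B zero_BIG_adj degree"
proof
  assume "silver B zero_BIG_adj degree"
  then obtain I c where alpha: "alpha_set B zero_BIG_adj I"
    and c: "proper_coloring B zero_BIG_adj (degree + 1) c" "\<forall>y\<in>I. rainbow B zero_BIG_adj degree c y"
    unfolding silver_def by blast
  have "V \<noteq> {}" using assms unfolding repl_def by auto
  note I = alpha_set_intersecting[OF alpha this]
  have fin: "finite I" using intersecting_finite[OF I(1)] .
  have "{..<degree + 1} \<subseteq> c ` I"
    using silver_colour_on_alpha_set[OF alpha assms c] by blast
  hence "degree + 1 \<le> card (c ` I)" using card_mono[OF finite_imageI[OF fin]] by fastforce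
  also have "\<dots> \<le> card I" by (rule card_image_le[OF fin])
  finally have "degree + 1 \<le> card I" .
  thus False using max_intersecting(1)[OF I assms] degree_exceeds_repl[OF assms] by simp
qed

(* STS(7), the Fano plane: any two blocks meet, so the graph is edgeless. *)
theorem seven_totally_silver:
  assumes v: "card V = 7"
  shows "totally_silver B zero_BIG_adj degree"
proof (rule cluster_graph_totally_silver)
  have "V \<noteq> {}" using v by auto
  hence "repl = 3" "card B = 7" using card_points card_blocks v by simp_all
  hence "degree = 0" unfolding degree_def by simp
  hence single: "closed_nbhd B zero_BIG_adj x = {x}" if "x \<in> B" for x
    using card_closed_nbhd_blocks[OF that] unfolding closed_nbhd_def
    by (metis One_nat_def add_0 card_1_singletonE insertI1 singletonD)
  show "\<forall>x\<in>B. \<not> zero_BIG_adj x x" using not_adj_self by blast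
  show "\<forall>x\<in>B. card (closed_nbhd B zero_BIG_adj x) = degree + 1" using card_closed_nbhd_blocks by blast
  show "\<forall>x\<in>B. \<forall>z\<in>closed_nbhd B zero_BIG_adj x. closed_nbhd B zero_BIG_adj z = closed_nbhd B zero_BIG_adj x"
    using single by simp
qed

lemma nine_params:
  assumes "card V = 9"
  shows "repl = 4" "degree = 2"
proof -
  have "V \<noteq> {}" using assms by auto
  thus "repl = 4" using card_points assms by simp
  hence "card B = 12" using card_blocks assms by simp
  thus "degree = 2" using \<open>repl = 4\<close> unfolding degree_def by simp
qed

lemma card_complement:
  assumes v: "card V = 9" and x: "x \<in> B" "z \<in> B" "x \<inter> z = {}"
  shows "card (V - (x \<union> z)) = 3"
proof -
  have "card (x \<union> z) = 6" using card_Un_disjoint[OF finite_block finite_block] x card_block by simp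
  moreover have "x \<union> z \<subseteq> V" using x block_subset by blast
  ultimately show ?thesis using card_Diff_subset[of "x \<union> z" V] v finite_block x by simp
qed

(* In STS(9), if the three points outside two disjoint blocks x, z are not a block, the line
   through two of them has its third point in x or z, hence is a neighbour of z or of x. *)
lemma nine_pair_line:
  assumes v: "card V = 9" and x: "x \<in> B" "z \<in> B" "x \<inter> z = {}" and R: "V - (x \<union> z) \<notin> B"
    and r: "r \<in> V - (x \<union> z)" "r' \<in> V - (x \<union> z)" "r \<noteq> r'"
  shows "line r r' \<in> (nbhd B zero_BIG_adj x - {z}) \<union> (nbhd B zero_BIG_adj z - {x})"
    "\<forall>s\<in>V - (x \<union> z). s \<noteq> r \<longrightarrow> s \<noteq> r' \<longrightarrow> s \<notin> line r r'"
proof -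
  let ?R = "V - (x \<union> z)" and ?L = "line r r'"
  have L: "?L \<in> B" "r \<in> ?L" "r' \<in> ?L" using line[of r r'] r by auto
  have "\<not> ?L \<subseteq> ?R"
  proof
    assume "?L \<subseteq> ?R"
    hence "?L = ?R" using card_subset_eq[of ?R ?L] card_block[OF L(1)] card_complement[OF v x]
      finite_points by simp
    thus False using L(1) R by simp
  qed
  then obtain w where w: "w \<in> ?L" "w \<notin> ?R" by blast
  have wxz: "w \<in> x \<or> w \<in> z" using w L(1) block_subset by blast
  have L_eq: "?L = {r, r', w}" using block_eq_triple[OF L(1)] w L r by auto
  show "\<forall>s\<in>?R. s \<noteq> r \<longrightarrow> s \<noteq> r' \<longrightarrow> s \<notin> ?L" using L_eq w(2) by auto
  show "?L \<in> (nbhd B zero_BIG_adj x - {z}) \<union> (nbhd B zero_BIG_adj z - {x})"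
    using wxz L_eq L(1) r x(3) unfolding nbhd_def zero_BIG_adj_def by auto
qed

(* In STS(9) the points outside two disjoint blocks form a block: otherwise the three lines
   joining them would be three distinct neighbours of x or z other than z, x, but x and z
   have only one further neighbour each. *)
lemma nine_complement_block:
  assumes v: "card V = 9" and x: "x \<in> B" "z \<in> B" "x \<inter> z = {}"
  shows "V - (x \<union> z) \<in> B"
proof (rule ccontr)
  assume R: "V - (x \<union> z) \<notin> B"
  let ?S = "(nbhd B zero_BIG_adj x - {z}) \<union> (nbhd B zero_BIG_adj z - {x})"
  obtain r1 r2 r3 where r: "V - (x \<union> z) = {r1, r2, r3}" "r1 \<noteq> r2" "r2 \<noteq> r3" "r1 \<noteq> r3"
    using card_complement[OF v x] unfolding card_3_iff by blast
  note pl = nine_pair_line[OF v x R]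
  have sub: "{line r1 r2, line r1 r3, line r2 r3} \<subseteq> ?S" using pl(1) r by auto
  have out: "r3 \<notin> line r1 r2" "r2 \<notin> line r1 r3" using pl(2) r by auto
  have "{r1, r2, r3} \<subseteq> V" using r(1) by blast
  hence "r3 \<in> line r1 r3" "r3 \<in> line r2 r3" "r2 \<in> line r2 r3" using line r(2-4) by auto
  hence "line r1 r2 \<noteq> line r1 r3" "line r1 r2 \<noteq> line r2 r3" "line r1 r3 \<noteq> line r2 r3"
    using out by auto
  hence "card {line r1 r2, line r1 r3, line r2 r3} = 3" by simp
  moreover have "card ?S \<le> 2"
  proof -
    have adj: "z \<in> nbhd B zero_BIG_adj x" "x \<in> nbhd B zero_BIG_adj z"
      using x unfolding nbhd_def zero_BIG_adj_def by auto
    have "card (nbhd B zero_BIG_adj w) = 2" if "w \<in> B" for w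
      using regular that nine_params(2)[OF v] unfolding regular_graph_def by simp
    moreover have "finite (nbhd B zero_BIG_adj w)" for w using finite_blocks unfolding nbhd_def by simp
    ultimately have "card (nbhd B zero_BIG_adj x - {z}) = 1" "card (nbhd B zero_BIG_adj z - {x}) = 1"
      using adj x by (simp_all add: card_Diff_singleton)
    thus ?thesis
      using card_Un_le[of "nbhd B zero_BIG_adj x - {z}" "nbhd B zero_BIG_adj z - {x}"] by simp
  qed
  moreover have "finite ?S" using finite_blocks unfolding nbhd_def by simp
  ultimately show False using card_mono[OF _ sub] by simp
qed

lemma nine_closed_nbhd:
  assumes v: "card V = 9" and x: "x \<in> B" "z \<in> B" "x \<inter> z = {}"
  shows "closed_nbhd B zero_BIG_adj x = {x, z, V - (x \<union> z)}"
proof -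
  let ?N = "nbhd B zero_BIG_adj x" and ?R = "V - (x \<union> z)"
  have sub: "{z, ?R} \<subseteq> ?N"
    using nine_complement_block[OF v x] x unfolding nbhd_def zero_BIG_adj_def by auto
  have "?R \<noteq> {}" using card_complement[OF v x] by (metis card.empty zero_neq_numeral)
  hence "z \<noteq> ?R" by blast
  hence "card {z, ?R} = card ?N" using regular x(1) nine_params(2)[OF v] unfolding regular_graph_def by simp
  hence "{z, ?R} = ?N" using card_subset_eq[OF _ sub] finite_blocks unfolding nbhd_def by simp
  thus ?thesis unfolding closed_nbhd_def by auto
qed

(* STS(9), the affine plane of order 3: the graph is a disjoint union of triangles
   (the parallel classes), each coloured with all three colours. *)
theorem nine_totally_silver:
  assumes v: "card V = 9"
  shows "totally_silver B zero_BIG_adj degree"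
proof (rule cluster_graph_totally_silver)
  show "\<forall>x\<in>B. \<not> zero_BIG_adj x x" using not_adj_self by blast
  show "\<forall>x\<in>B. card (closed_nbhd B zero_BIG_adj x) = degree + 1" using card_closed_nbhd_blocks by blast
  show "\<forall>x\<in>B. \<forall>z\<in>closed_nbhd B zero_BIG_adj x. closed_nbhd B zero_BIG_adj z = closed_nbhd B zero_BIG_adj x"
  proof (intro ballI)
    fix x z assume x: "x \<in> B" and "z \<in> closed_nbhd B zero_BIG_adj x"
    hence "z = x \<or> (z \<in> B \<and> x \<inter> z = {})" using closed_nbhd_iff by blast
    thus "closed_nbhd B zero_BIG_adj z = closed_nbhd B zero_BIG_adj x"
      using nine_closed_nbhd[OF v x] nine_closed_nbhd[OF v _ x] by (auto simp: Un_commute Int_commute)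
  qed
qed

end

theorem theorem8:
  fixes V :: "'a set" and B :: "'a set set" and v :: nat
  assumes "is_STS V B" and "card V = v"
  shows "((v mod 6 = 1 \<or> v mod 6 = 3) \<and> v > 9 \<longrightarrow>
           (\<exists>r. regular_graph B zero_BIG_adj r \<and> \<not> silver B zero_BIG_adj r)) \<and>
         (v = 7 \<or> v = 9 \<longrightarrow>
           (\<exists>r. regular_graph B zero_BIG_adj r \<and> totally_silver B zero_BIG_adj r))"
proof -
  interpret sts V B by (rule sts.intro) (rule assms(1))
  show ?thesis
  proof (intro conjI impI)
    assume v: "(v mod 6 = 1 \<or> v mod 6 = 3) \<and> v > 9"
    hence "V \<noteq> {}" using assms(2) by auto
    hence "v = 2 * repl + 1" using card_points assms(2) by simp
    hence "6 \<le> repl" using v by presburger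
    thus "\<exists>r. regular_graph B zero_BIG_adj r \<and> \<not> silver B zero_BIG_adj r"
      using regular not_silver by blast
  next
    assume "v = 7 \<or> v = 9"
    thus "\<exists>r. regular_graph B zero_BIG_adj r \<and> totally_silver B zero_BIG_adj r"
      using regular seven_totally_silver nine_totally_silver assms(2) by blast
  qed
qed

end
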